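(* Every absolutely flat (von Neumann regular) commutative ring $S$ has strong avoidance.
   Context: All rings are commutative with $1\neq 0$. A ring map $\phi:R\to S$ has avoidance if whenever $I,I_1,\ldots,I_n$ are ideals of $R$ with $I\subseteq\bigcup_{k=1}^n I_k$, then $IS\subseteq I_kS$ for some $k$ (where $IS$ denotes the extension of $I$ to $S$). A ring $S$ has strong avoidance if every ring map $R\to S$ has avoidance. *)

theory Defs
  imports Main
begin

definition cr_ideal :: "'a::comm_ring_1 set \<Rightarrow> bool" where
  "cr_ideal I \<longleftrightarrow> 0 \<in> I \<and> (\<forall>x\<in>I. \<forall>y\<in>I. x + y \<in> I) \<and> (\<forall>x\<in>I. \<forall>r. r * x \<in> I)"

definition ideal_gen :: "'a::comm_ring_1 set \<Rightarrow> 'a set" where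
  "ideal_gen A = \<Inter> {J. cr_ideal J \<and> A \<subseteq> J}"

definition cr_hom :: "('r::comm_ring_1 \<Rightarrow> 's::comm_ring_1) \<Rightarrow> bool" where
  "cr_hom f \<longleftrightarrow> f 1 = 1 \<and> (\<forall>x y. f (x + y) = f x + f y) \<and> (\<forall>x y. f (x * y) = f x * f y)"

definition ext_ideal :: "('r::comm_ring_1 \<Rightarrow> 's::comm_ring_1) \<Rightarrow> 'r set \<Rightarrow> 's set" where
  "ext_ideal f I = ideal_gen (f ` I)"

definition has_avoidance :: "('r::comm_ring_1 \<Rightarrow> 's::comm_ring_1) \<Rightarrow> bool" where
  "has_avoidance f \<longleftrightarrow>
     (\<forall>(I :: 'r set) (n :: nat) (Is :: nat \<Rightarrow> 'r set).
        cr_ideal I \<longrightarrow> (\<forall>k\<in>{1..n}. cr_ideal (Is k)) \<longrightarrow> I \<subseteq> (\<Union>k\<in>{1..n}. Is k) \<longrightarrow>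
        (\<exists>k\<in>{1..n}. ext_ideal f I \<subseteq> ext_ideal f (Is k)))"

definition von_neumann_regular :: "'a::comm_ring_1 itself \<Rightarrow> bool" where
  "von_neumann_regular _ \<longleftrightarrow> (\<forall>a::'a. \<exists>x. a = a * a * x)"

end

theory Submission
  imports Defs
begin

text \<open>In an absolutely flat ring every ideal is the intersection of the prime ideals containing it:
  if \<open>x \<notin> J\<close>, write \<open>x = x x y\<close>; the idempotent \<open>e = x y\<close> lies outside \<open>J\<close>, and an ideal maximal
  among those containing \<open>J\<close> but not \<open>e\<close> is prime. So if \<open>IS \<not>\<subseteq> I\<^sub>kS\<close> for every \<open>k\<close>, there are
  primes \<open>P\<^sub>k \<supseteq> I\<^sub>kS\<close> not containing \<open>IS\<close>; their contractions are primes \<open>Q\<^sub>k \<supseteq> I\<^sub>k\<close> with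
  \<open>I \<not>\<subseteq> Q\<^sub>k\<close>, and \<open>I \<subseteq> \<Union>Q\<^sub>k\<close> contradicts classical prime avoidance.\<close>

definition cr_prime_ideal :: "'a::comm_ring_1 set \<Rightarrow> bool" where
  "cr_prime_ideal P \<longleftrightarrow> cr_ideal P \<and> 1 \<notin> P \<and> (\<forall>a b. a * b \<in> P \<longrightarrow> a \<in> P \<or> b \<in> P)"

lemma cr_prime_ideal_imp_cr_ideal: "cr_prime_ideal P \<Longrightarrow> cr_ideal P"
  unfolding cr_prime_ideal_def by blast

lemma cr_ideal_zero: "cr_ideal J \<Longrightarrow> 0 \<in> J"
  unfolding cr_ideal_def by blast

lemma cr_ideal_add: "cr_ideal J \<Longrightarrow> x \<in> J \<Longrightarrow> y \<in> J \<Longrightarrow> x + y \<in> J"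
  unfolding cr_ideal_def by blast

lemma cr_ideal_mult_left: "cr_ideal J \<Longrightarrow> x \<in> J \<Longrightarrow> r * x \<in> J"
  unfolding cr_ideal_def by blast

lemma cr_ideal_mult_right: "cr_ideal J \<Longrightarrow> x \<in> J \<Longrightarrow> x * r \<in> J"
  by (metis cr_ideal_mult_left mult.commute)

lemma cr_ideal_add_cancel_left:
  assumes "cr_ideal J" "x \<in> J"
  shows "x + y \<in> J \<longleftrightarrow> y \<in> J"
proof
  assume "x + y \<in> J"
  moreover have "(- 1) * x \<in> J" using assms by (rule cr_ideal_mult_left)
  ultimately have "(x + y) + (- 1) * x \<in> J" by (rule cr_ideal_add[OF assms(1)])
  then show "y \<in> J" by simp
qed (use assms cr_ideal_add in blast)

lemma cr_ideal_add_cancel_right: "cr_ideal J \<Longrightarrow> y \<in> J \<Longrightarrow> x + y \<in> J \<longleftrightarrow> x \<in> J"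
  using cr_ideal_add_cancel_left[of J y x] by (simp add: add.commute)

lemma cr_ideal_ideal_gen: "cr_ideal (ideal_gen A)"
  unfolding ideal_gen_def cr_ideal_def by auto

lemma ideal_gen_superset: "A \<subseteq> ideal_gen A"
  unfolding ideal_gen_def by auto

lemma ideal_gen_minimal: "cr_ideal J \<Longrightarrow> A \<subseteq> J \<Longrightarrow> ideal_gen A \<subseteq> J"
  unfolding ideal_gen_def by auto

lemma ideal_gen_subset_iff: "cr_ideal J \<Longrightarrow> ideal_gen A \<subseteq> J \<longleftrightarrow> A \<subseteq> J"
  using ideal_gen_minimal ideal_gen_superset by blast

lemma cr_ideal_prod:
  assumes "cr_ideal J" "finite A" "k \<in> A" "x k \<in> J"
  shows "(\<Prod>j\<in>A. x j) \<in> J"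
proof -
  have "(\<Prod>j\<in>A. x j) = x k * (\<Prod>j\<in>A - {k}. x j)"
    using assms(2,3) by (simp add: prod.remove)
  with cr_ideal_mult_right[OF assms(1,4)] show ?thesis by simp
qed

lemma cr_prime_ideal_prod:
  assumes "cr_prime_ideal P" "finite A" "(\<Prod>j\<in>A. x j) \<in> P"
  shows "\<exists>j\<in>A. x j \<in> P"
  using assms(2,3)
proof (induction A rule: finite_induct)
  case empty
  with assms(1) show ?case by (simp add: cr_prime_ideal_def)
next
  case (insert a A)
  then have "x a * (\<Prod>j\<in>A. x j) \<in> P" by simp
  with assms(1) have "x a \<in> P \<or> (\<Prod>j\<in>A. x j) \<in> P" unfolding cr_prime_ideal_def by blast
  with insert.IH show ?case by blast
qed

text \<open>The element of \<open>I\<close> witnessing a minimal counterexample is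
  \<open>x\<^sub>i\<^sub>0 + \<Prod>\<^sub>j\<^sub>\<noteq>\<^sub>i\<^sub>0 x\<^sub>j\<close>, where \<open>x\<^sub>i \<in> I\<close> avoids all \<open>Q\<^sub>j\<close> with \<open>j \<noteq> i\<close>.\<close>

lemma prime_avoidance:
  assumes "finite K" "cr_ideal I" "\<forall>k\<in>K. cr_prime_ideal (Q k)" "I \<subseteq> (\<Union>k\<in>K. Q k)"
  shows "\<exists>k\<in>K. I \<subseteq> Q k"
  using assms
proof (induction K rule: finite_psubset_induct)
  case (psubset K)
  note I = \<open>cr_ideal I\<close> and prime = \<open>\<forall>k\<in>K. cr_prime_ideal (Q k)\<close>
    and cover = \<open>I \<subseteq> (\<Union>k\<in>K. Q k)\<close>
  show ?case
  proof (rule ccontr)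
    assume none: "\<not> (\<exists>k\<in>K. I \<subseteq> Q k)"
    have "\<exists>x\<in>I. \<forall>j\<in>K - {i}. x \<notin> Q j" if "i \<in> K" for i
      using psubset.IH[of "K - {i}"] that I prime none by blast
    then obtain x where x_in_I: "\<And>i. i \<in> K \<Longrightarrow> x i \<in> I"
      and x_avoids: "\<And>i j. i \<in> K \<Longrightarrow> j \<in> K - {i} \<Longrightarrow> x i \<notin> Q j"
      by metis
    have x_in_Q: "x i \<in> Q i" if "i \<in> K" for i
      using cover x_in_I[OF that] x_avoids[OF that] by blast
    obtain i0 where i0: "i0 \<in> K"
      using cover cr_ideal_zero[OF I] by blast
    define p where "p = (\<Prod>j\<in>K - {i0}. x j)"
    have "K \<noteq> {i0}" using none cover by auto
    with i0 obtain j0 where j0: "j0 \<in> K - {i0}" by blast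
    have "p \<in> I"
      unfolding p_def using cr_ideal_prod[OF I _ j0] x_in_I j0 psubset.hyps by blast
    then have "x i0 + p \<in> I" using I x_in_I[OF i0] cr_ideal_add by blast
    then obtain k where k: "k \<in> K" "x i0 + p \<in> Q k" using cover by blast
    have Qk: "cr_ideal (Q k)" using prime k(1) cr_prime_ideal_imp_cr_ideal by blast
    show False
    proof (cases "k = i0")
      case True
      then have "p \<in> Q i0" using k cr_ideal_add_cancel_left[OF Qk x_in_Q[OF k(1)]] by simp
      then obtain j where "j \<in> K - {i0}" "x j \<in> Q i0"
        using cr_prime_ideal_prod[of "Q i0" "K - {i0}" x] prime i0 psubset.hyps unfolding p_def by blast
      with x_avoids i0 show False by blast
    next
      case False
      then have "p \<in> Q k"
        unfolding p_def using cr_ideal_prod[OF Qk, of "K - {i0}" k x] psubset.hyps k x_in_Q by blast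
      then have "x i0 \<in> Q k" using k(2) cr_ideal_add_cancel_right[OF Qk] by blast
      with x_avoids i0 k(1) False show False by blast
    qed
  qed
qed

lemma cr_ideal_Union_chain:
  assumes "C \<in> chains {M. cr_ideal M}" "C \<noteq> {}"
  shows "cr_ideal (\<Union>C)"
proof -
  have chain: "\<And>A B. A \<in> C \<Longrightarrow> B \<in> C \<Longrightarrow> A \<subseteq> B \<or> B \<subseteq> A"
    and ideals: "\<And>A. A \<in> C \<Longrightarrow> cr_ideal A"
    using assms(1) unfolding chains_def chain_subset_def by auto
  show ?thesis unfolding cr_ideal_def
  proof (intro conjI ballI allI)
    show "0 \<in> \<Union>C" using assms(2) ideals cr_ideal_zero by blast
  next
    fix a b assume "a \<in> \<Union>C" "b \<in> \<Union>C"
    then obtain A B where "A \<in> C" "B \<in> C" "a \<in> A" "b \<in> B" by blast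
    with chain[of A B] ideals show "a + b \<in> \<Union>C" using cr_ideal_add by blast
  next
    fix a r assume "a \<in> \<Union>C"
    with ideals cr_ideal_mult_left show "r * a \<in> \<Union>C" by blast
  qed
qed

lemma exists_maximal_ideal_avoiding:
  assumes "cr_ideal J" "e \<notin> J"
  obtains M where "cr_ideal M" "J \<subseteq> M" "e \<notin> M"
    "\<And>N. cr_ideal N \<Longrightarrow> M \<subseteq> N \<Longrightarrow> e \<notin> N \<Longrightarrow> N = M"
proof -
  define A where "A = {M. cr_ideal M \<and> J \<subseteq> M \<and> e \<notin> M}"
  have "\<exists>U\<in>A. \<forall>X\<in>C. X \<subseteq> U" if C: "C \<in> chains A" for C
  proof (cases "C = {}")
    case True
    with assms show ?thesis unfolding A_def by blast
  next
    case False
    have "C \<in> chains {M. cr_ideal M}" using C unfolding A_def chains_def by blast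
    then have "cr_ideal (\<Union>C)" using False by (rule cr_ideal_Union_chain)
    with C False show ?thesis unfolding A_def chains_def by blast
  qed
  from Zorn_Lemma2[OF ballI[OF this]] obtain M
    where "M \<in> A" "\<forall>N\<in>A. M \<subseteq> N \<longrightarrow> N = M" by blast
  with that show ?thesis unfolding A_def by blast
qed

lemma maximal_ideal_avoiding_idempotent_is_prime:
  fixes e :: "'a::comm_ring_1"
  assumes M: "cr_ideal M" and e_idem: "e * e = e" and e_notin: "e \<notin> M"
    and maximal: "\<And>N. cr_ideal N \<Longrightarrow> M \<subseteq> N \<Longrightarrow> e \<notin> N \<Longrightarrow> N = M"
  shows "cr_prime_ideal M"
proof -
  have e_in_sum: "\<exists>m s. m \<in> M \<and> e = m + s * a" if a: "a \<notin> M" for a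
  proof (rule ccontr)
    define N where "N = {m + s * a |m s. m \<in> M}"
    assume "\<nexists>m s. m \<in> M \<and> e = m + s * a"
    then have "e \<notin> N" unfolding N_def by blast
    have "cr_ideal N" unfolding cr_ideal_def
    proof (intro conjI ballI allI)
      have "0 = 0 + 0 * a" by simp
      then show "0 \<in> N" unfolding N_def using cr_ideal_zero[OF M] by blast
    next
      fix u v assume "u \<in> N" "v \<in> N"
      then obtain m1 s1 m2 s2 where "u = m1 + s1 * a" "v = m2 + s2 * a" "m1 \<in> M" "m2 \<in> M"
        unfolding N_def by blast
      then have "u + v = (m1 + m2) + (s1 + s2) * a" "m1 + m2 \<in> M"
        using cr_ideal_add[OF M] by (auto simp: algebra_simps)
      then show "u + v \<in> N" unfolding N_def by blast
    next
      fix u r assume "u \<in> N"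
      then obtain m s where "u = m + s * a" "m \<in> M" unfolding N_def by blast
      then have "r * u = r * m + (r * s) * a" "r * m \<in> M"
        using cr_ideal_mult_left[OF M] by (auto simp: algebra_simps)
      then show "r * u \<in> N" unfolding N_def by blast
    qed
    moreover have "M \<subseteq> N" unfolding N_def
      by (metis (mono_tags, lifting) add_0_right mem_Collect_eq mult_zero_left subsetI)
    ultimately have "N = M" using maximal \<open>e \<notin> N\<close> by blast
    moreover have "a \<in> N" unfolding N_def using cr_ideal_zero[OF M]
      by (metis (mono_tags, lifting) add_0 mem_Collect_eq mult_1)
    ultimately show False using a by blast
  qed
  have "a \<in> M \<or> b \<in> M" if ab: "a * b \<in> M" for a b
  proof (rule ccontr)
    assume "\<not> (a \<in> M \<or> b \<in> M)"
    then obtain m1 s m2 t where "m1 \<in> M" "m2 \<in> M" "e = m1 + s * a" "e = m2 + t * b"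
      using e_in_sum by meson
    then have "e = (m1 + s * a) * (m2 + t * b)" using e_idem by simp
    also have "\<dots> = m1 * (m2 + t * b) + m2 * (s * a) + (s * t) * (a * b)"
      by (simp add: algebra_simps)
    also have "\<dots> \<in> M"
      using M \<open>m1 \<in> M\<close> \<open>m2 \<in> M\<close> ab by (metis cr_ideal_add cr_ideal_mult_left cr_ideal_mult_right)
    finally show False using e_notin by blast
  qed
  moreover have "1 \<notin> M" using e_notin cr_ideal_mult_left[OF M, of 1 e] by auto
  ultimately show ?thesis using M unfolding cr_prime_ideal_def by blast
qed

lemma von_neumann_regular_prime_separation:
  fixes J :: "'a::comm_ring_1 set"
  assumes "von_neumann_regular TYPE('a)" and J: "cr_ideal J" and x_notin: "x \<notin> J"
  obtains P where "cr_prime_ideal P" "J \<subseteq> P" "x \<notin> P"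
proof -
  obtain y where y: "x = x * x * y" using assms(1) unfolding von_neumann_regular_def by blast
  define e where "e = x * y"
  have x_eq: "x = x * e" using y unfolding e_def by (simp add: mult.assoc)
  have e_idem: "e * e = e" using y unfolding e_def by (metis mult.assoc mult.commute)
  have "e \<notin> J" using x_eq x_notin cr_ideal_mult_left[OF J] by metis
  then obtain M where M: "cr_ideal M" "J \<subseteq> M" "e \<notin> M"
    and maximal: "\<And>N. cr_ideal N \<Longrightarrow> M \<subseteq> N \<Longrightarrow> e \<notin> N \<Longrightarrow> N = M"
    using exists_maximal_ideal_avoiding[OF J] by blast
  have "cr_prime_ideal M"
    using maximal_ideal_avoiding_idempotent_is_prime[OF M(1) e_idem M(3) maximal] .
  moreover have "x \<notin> M" using M(1,3) cr_ideal_mult_right unfolding e_def by blast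
  ultimately show ?thesis using that M(2) by blast
qed

lemma cr_prime_ideal_vimage:
  assumes f: "cr_hom f" and P: "cr_prime_ideal P"
  shows "cr_prime_ideal (f -` P)"
proof -
  have "f 0 = 0" using f unfolding cr_hom_def by (metis add_cancel_right_right)
  with f P show ?thesis unfolding cr_prime_ideal_def cr_ideal_def cr_hom_def by auto
qed

lemma ext_ideal_not_subset_imp_prime_separation:
  fixes f :: "'r::comm_ring_1 \<Rightarrow> 's::comm_ring_1"
  assumes "von_neumann_regular TYPE('s)" "cr_hom f" "\<not> ext_ideal f I \<subseteq> ext_ideal f J"
  shows "\<exists>Q. cr_prime_ideal Q \<and> J \<subseteq> Q \<and> \<not> I \<subseteq> Q"
proof -
  have ext_J: "cr_ideal (ext_ideal f J)" unfolding ext_ideal_def by (rule cr_ideal_ideal_gen)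
  with assms(3) obtain a where "a \<in> I" "f a \<notin> ext_ideal f J"
    unfolding ext_ideal_def[of f I] ideal_gen_subset_iff[OF ext_J] by blast
  moreover obtain P where "cr_prime_ideal P" "ext_ideal f J \<subseteq> P" "f a \<notin> P"
    using von_neumann_regular_prime_separation[OF assms(1) ext_J \<open>f a \<notin> ext_ideal f J\<close>] .
  moreover have "f ` J \<subseteq> ext_ideal f J"
    unfolding ext_ideal_def by (rule ideal_gen_superset)
  ultimately show ?thesis using cr_prime_ideal_vimage[OF assms(2)] by blast
qed

theorem proposition4p3:
  fixes f :: "'r::comm_ring_1 \<Rightarrow> 's::comm_ring_1"
  assumes "von_neumann_regular TYPE('s)"
    and "cr_hom f"
  shows "has_avoidance f"
  unfolding has_avoidance_def
proof (intro allI impI)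
  fix I :: "'r set" and n :: nat and Is :: "nat \<Rightarrow> 'r set"
  assume I: "cr_ideal I" and "\<forall>k\<in>{1..n}. cr_ideal (Is k)" and cover: "I \<subseteq> (\<Union>k\<in>{1..n}. Is k)"
  show "\<exists>k\<in>{1..n}. ext_ideal f I \<subseteq> ext_ideal f (Is k)"
  proof (rule ccontr)
    assume "\<not> ?thesis"
    then have "\<forall>k\<in>{1..n}. \<exists>Q. cr_prime_ideal Q \<and> Is k \<subseteq> Q \<and> \<not> I \<subseteq> Q"
      using ext_ideal_not_subset_imp_prime_separation[OF assms] by blast
    then obtain Q where Q: "\<forall>k\<in>{1..n}. cr_prime_ideal (Q k) \<and> Is k \<subseteq> Q k \<and> \<not> I \<subseteq> Q k"
      by metis
    with cover have "I \<subseteq> (\<Union>k\<in>{1..n}. Q k)" by blast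
    with I Q obtain k where "k \<in> {1..n}" "I \<subseteq> Q k"
      using prime_avoidance[of "{1..n}" I Q] by blast
    with Q show False by blast
  qed
qed

end
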